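(* Let $g:[1/2,1]\to\mathbb{R}$ be non-decreasing on $[1/2,1]$ with $g(1)\neq g(1/2)$. Then for any $a,b>0$, \[ a\sharp b+\frac{2}{g(1)-g\left(\frac12\right)}\left[\int_{1/2}^{1}g(t)H_t(a,b)\,dt-L(a,b)\int_{1/2}^{1}g(t)\,dt\right]\le a\nabla b . \]
   Context: For $a,b>0$: $a\sharp b=\sqrt{ab}$, $a\nabla b=\frac{a+b}{2}$, $a\sharp_t b=a^{1-t}b^{t}$. The Heinz mean is $H_t(a,b)=\frac{a\sharp_t b+b\sharp_t a}{2}$ for $0\le t\le1$, and the logarithmic mean is $L(a,b)=\frac{b-a}{\ln b-\ln a}$ for $a\neq b$, with the usual convention $L(a,a)=a$. *)

theory Defs
  imports "HOL-Analysis.Analysis"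
begin

definition geo_mean :: "real \<Rightarrow> real \<Rightarrow> real" where
  "geo_mean a b = sqrt (a * b)"

definition arith_mean :: "real \<Rightarrow> real \<Rightarrow> real" where
  "arith_mean a b = (a + b) / 2"

definition wgeo_mean :: "real \<Rightarrow> real \<Rightarrow> real \<Rightarrow> real" where
  "wgeo_mean t a b = a powr (1 - t) * b powr t"

definition heinz_mean :: "real \<Rightarrow> real \<Rightarrow> real \<Rightarrow> real" where
  "heinz_mean t a b = (wgeo_mean t a b + wgeo_mean t b a) / 2"

definition log_mean :: "real \<Rightarrow> real \<Rightarrow> real" where
  "log_mean a b = (if a = b then a else (b - a) / (ln b - ln a))"

end

theory Submission
  imports Defs
begin

text \<open>
  Write \<open>h(t) = H\<^sub>t(a,b)\<close> and \<open>L = L(a,b)\<close>. The function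
  \<open>(a\<sharp>\<^sub>tb - b\<sharp>\<^sub>ta) / (2 (ln b - ln a))\<close> is an antiderivative of \<open>h\<close>, so the mean of \<open>h\<close>
  over \<open>[1/2,1]\<close> is \<open>L\<close> and the bracket equals \<open>\<integral> (g t - g(1/2)) (h t - L) dt\<close>.
  The first factor lies in \<open>[0, g(1) - g(1/2)]\<close> and the second is at most \<open>a\<nabla>b - L\<close>,
  because \<open>h \<le> a\<nabla>b\<close> by Young's inequality; hence the bracket is at most
  \<open>(g(1) - g(1/2))(a\<nabla>b - L)/2\<close>. It remains to use \<open>a\<sharp>b \<le> L\<close>, which follows by
  averaging \<open>a\<sharp>b \<le> h\<close>.
\<close>

lemma heinz_mean_le_arith_mean:
  assumes "a > 0" "b > 0" "0 \<le> t" "t \<le> 1"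
  shows "heinz_mean t a b \<le> arith_mean a b"
  using Youngs_inequality_0[of "1 - t" t a b] Youngs_inequality_0[of "1 - t" t b a] assms
  by (simp add: heinz_mean_def wgeo_mean_def arith_mean_def algebra_simps)

lemma geo_mean_le_heinz_mean:
  assumes "a > 0" "b > 0"
  shows "geo_mean a b \<le> heinz_mean t a b"
proof -
  have "wgeo_mean t a b * wgeo_mean t b a = (a powr (1 - t) * a powr t) * (b powr (1 - t) * b powr t)"
    by (simp add: wgeo_mean_def mult_ac)
  also have "\<dots> = a * b"
    using assms by (simp flip: powr_add)
  finally have "wgeo_mean t a b * wgeo_mean t b a = a * b" .
  moreover have "wgeo_mean t a b > 0" "wgeo_mean t b a > 0"
    using assms by (auto simp: wgeo_mean_def)
  ultimately show ?thesis
    using arith_geo_mean_sqrt[of "wgeo_mean t a b" "wgeo_mean t b a"]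
    by (simp add: heinz_mean_def geo_mean_def)
qed

lemma continuous_on_heinz_mean:
  assumes "a > 0" "b > 0"
  shows "continuous_on S (\<lambda>t. heinz_mean t a b)"
  unfolding heinz_mean_def wgeo_mean_def using assms
  by (intro continuous_intros) auto

lemma has_real_derivative_wgeo_mean:
  assumes "a > 0" "b > 0"
  shows "((\<lambda>t. wgeo_mean t a b) has_real_derivative wgeo_mean t a b * (ln b - ln a)) (at t)"
proof -
  have eq: "wgeo_mean s a b = exp (ln a + s * (ln b - ln a))" for s
    using assms by (simp add: wgeo_mean_def powr_def exp_add[symmetric] algebra_simps)
  have "((\<lambda>t. exp (ln a + t * (ln b - ln a))) has_real_derivative
      exp (ln a + t * (ln b - ln a)) * (ln b - ln a)) (at t)"
    by (auto intro!: derivative_eq_intros)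
  then show ?thesis
    by (simp add: eq)
qed

lemma has_integral_heinz_mean:
  assumes "a > 0" "b > 0"
  shows "((\<lambda>t. heinz_mean t a b) has_integral log_mean a b / 2) {1/2..1}"
proof (cases "a = b")
  case True
  then have "heinz_mean t a b = a" for t
    using assms by (simp add: heinz_mean_def wgeo_mean_def flip: powr_add)
  then show ?thesis
    using True has_integral_const_real[of a "1/2" 1] by (simp add: log_mean_def)
next
  case False
  define c where "c = ln b - ln a"
  have "c \<noteq> 0"
    using False assms by (simp add: c_def)
  define F where "F t = (wgeo_mean t a b - wgeo_mean t b a) / (2 * c)" for t
  have "(F has_real_derivative heinz_mean t a b) (at t)" for t
  proof -
    have "((\<lambda>t. wgeo_mean t b a) has_real_derivative wgeo_mean t b a * (- c)) (at t)"
      using has_real_derivative_wgeo_mean[OF assms(2,1)] by (simp add: c_def)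
    then have "(F has_real_derivative (wgeo_mean t a b * c - wgeo_mean t b a * (- c)) / (2 * c)) (at t)"
      unfolding F_def using has_real_derivative_wgeo_mean[OF assms, folded c_def]
      by (intro DERIV_cdivide DERIV_diff)
    moreover have "(wgeo_mean t a b * c - wgeo_mean t b a * (- c)) / (2 * c) = heinz_mean t a b"
      using \<open>c \<noteq> 0\<close> by (simp add: heinz_mean_def divide_simps) (simp add: algebra_simps)
    ultimately show ?thesis
      by simp
  qed
  then have "((\<lambda>t. heinz_mean t a b) has_integral F 1 - F (1/2)) {1/2..1}"
    by (intro fundamental_theorem_of_calculus)
      (auto simp: has_real_derivative_iff_has_vector_derivative[symmetric] has_field_derivative_at_within)
  moreover have "F 1 - F (1/2) = log_mean a b / 2"
    using False assms \<open>c \<noteq> 0\<close>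
    by (simp add: F_def wgeo_mean_def log_mean_def c_def diff_divide_distrib mult.commute)
  ultimately show ?thesis
    by simp
qed

lemma geo_mean_le_log_mean:
  assumes "a > 0" "b > 0"
  shows "geo_mean a b \<le> log_mean a b"
  using has_integral_le[OF has_integral_const_real[of "geo_mean a b" "1/2" 1] has_integral_heinz_mean[OF assms]]
    geo_mean_le_heinz_mean[OF assms]
  by simp

lemma integrable_on_mono_on_mult_continuous_on:
  fixes g h :: "real \<Rightarrow> real"
  assumes "mono_on {c..d} g" "continuous_on {c..d} h"
  shows "(\<lambda>t. g t * h t) integrable_on {c..d}"
proof -
  have "g \<in> borel_measurable (lebesgue_on {c..d})"
    using integrable_mono_on[OF assms(1)] by (rule borel_measurable_integrable)
  moreover have "\<bar>g t\<bar> \<le> \<bar>g c\<bar> + \<bar>g d\<bar>" if "t \<in> {c..d}" for t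
    using assms(1) that mono_onD[of "{c..d}" g c t] mono_onD[of "{c..d}" g t d] by auto
  then have "bounded (g ` {c..d})"
    by (intro boundedI[where B = "\<bar>g c\<bar> + \<bar>g d\<bar>"]) auto
  moreover have "h absolutely_integrable_on {c..d}"
    using assms(2) by (rule absolutely_integrable_continuous_real)
  ultimately have "(\<lambda>t. g t * h t) absolutely_integrable_on {c..d}"
    by (intro absolutely_integrable_bounded_measurable_product_real) auto
  then show ?thesis
    by (simp add: absolutely_integrable_on_def)
qed

lemma mono_on_integral_mult_le:
  fixes g h :: "real \<Rightarrow> real"
  assumes "c < d" "mono_on {c..d} g"
    and gh: "(\<lambda>t. g t * h t) integrable_on {c..d}"
    and h: "(h has_integral m * (d - c)) {c..d}"
    and h_le: "\<And>t. t \<in> {c..d} \<Longrightarrow> h t \<le> M"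
  shows "integral {c..d} (\<lambda>t. g t * h t) - m * integral {c..d} g \<le> (g d - g c) * (M - m) * (d - c)"
proof -
  have g_bounds: "g c \<le> g t" "g t \<le> g d" if "t \<in> {c..d}" for t
    using assms(1,2) that by (auto simp: mono_on_def)
  have "m * (d - c) \<le> M * (d - c)"
    using has_integral_le[OF h has_integral_const_real[of M c d]] h_le assms(1) by simp
  then have "m \<le> M"
    using assms(1) by simp
  define k where "k t = (g t - g c) * (h t - m)" for t
  have "k = (\<lambda>t. g t * h t - m * g t - g c * h t + g c * m)"
    by (simp add: k_def fun_eq_iff algebra_simps)
  moreover have "((\<lambda>t. g c * m) has_integral g c * m * (d - c)) {c..d}"
    using has_integral_const_real[of "g c * m" c d] assms(1) by (simp add: mult_ac)
  then have "((\<lambda>t. g t * h t - m * g t - g c * h t + g c * m) has_integral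
      integral {c..d} (\<lambda>t. g t * h t) - m * integral {c..d} g - g c * (m * (d - c)) + g c * m * (d - c)) {c..d}"
    using gh integrable_on_mono_on[OF assms(2)] h
    by (intro has_integral_add has_integral_diff has_integral_mult_right integrable_integral)
  ultimately have "(k has_integral integral {c..d} (\<lambda>t. g t * h t) - m * integral {c..d} g) {c..d}"
    by simp
  moreover have "k t \<le> (g d - g c) * (M - m)" if "t \<in> {c..d}" for t
  proof -
    have "k t \<le> (g t - g c) * (M - m)"
      unfolding k_def using g_bounds[OF that] h_le[OF that] by (intro mult_left_mono) auto
    also have "\<dots> \<le> (g d - g c) * (M - m)"
      using g_bounds[OF that] \<open>m \<le> M\<close> by (intro mult_right_mono) auto
    finally show ?thesis .
  qed
  ultimately show ?thesis
    using has_integral_le[OF _ has_integral_const_real[of "(g d - g c) * (M - m)" c d]] assms(1)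
    by (simp add: mult_ac)
qed

theorem theorem2p3:
  fixes g :: "real \<Rightarrow> real" and a b :: real
  assumes "mono_on {1/2..1} g"
    and "g 1 \<noteq> g (1/2)"
    and "a > 0" and "b > 0"
  shows "geo_mean a b + 2 / (g 1 - g (1/2)) *
           (integral {1/2..1} (\<lambda>t. g t * heinz_mean t a b)
            - log_mean a b * integral {1/2..1} g)
         \<le> arith_mean a b"
proof -
  define D where "D = g 1 - g (1/2)"
  have "g (1/2) \<le> g 1"
    using assms(1) by (auto intro: mono_onD)
  then have "D > 0"
    using assms(2) by (simp add: D_def)
  have "integral {1/2..1} (\<lambda>t. g t * heinz_mean t a b) - log_mean a b * integral {1/2..1} g
      \<le> D * (arith_mean a b - log_mean a b) * (1 - 1/2)"
    unfolding D_def
    using has_integral_heinz_mean[OF assms(3,4)] heinz_mean_le_arith_mean[OF assms(3,4)]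
    by (intro mono_on_integral_mult_le integrable_on_mono_on_mult_continuous_on
        continuous_on_heinz_mean assms) auto
  then have "2 / D * (integral {1/2..1} (\<lambda>t. g t * heinz_mean t a b)
      - log_mean a b * integral {1/2..1} g) \<le> arith_mean a b - log_mean a b"
    using \<open>D > 0\<close> by (simp add: field_simps)
  then show ?thesis
    using geo_mean_le_log_mean[OF assms(3,4)] unfolding D_def by linarith
qed

end
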